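(* Let $\mathcal R=\mathcal R(\operatorname{dom}\mathsf m,\sigma)$ be the resolvent algebra, and for $0<\kappa<\Lambda<\infty$ and $t\in\mathbb R$ let $\alpha_{\kappa,\Lambda,t}$ and $\alpha_t$ be the $*$-automorphisms of $\mathcal R$ determined on generators by $$\alpha_{\kappa,\Lambda,t}(R(z,f))=R\big(z+i\mathsf M_{\kappa,\Lambda,t}(f),e^{it\omega}f\big),\qquad \alpha_t(R(z,f))=R\big(z+i\mathsf M_t(f),e^{it\omega}f\big).$$ Then for every $T>0$ and every $A\in\mathcal R$, $$\lim_{\kappa\to0,\ \Lambda\to\infty}\ \sup_{|t|\le T}\big\|\alpha_{\kappa,\Lambda,t}(A)-\alpha_t(A)\big\|=0.$$
   Context: $L^2(\mathbb{R}^3)$ with Fourier transform $\hat f$, inner product $\langle f,g\rangle=\int\overline{\hat f}\hat g$, $\omega(k)=|k|$. $\operatorname{dom}\mathsf m=\{f\in L^2:\int|\hat f||k|^{-3/2}dk<\infty\}$, $\mathsf m(f)=\int\hat f|k|^{-3/2}dk$, $\mathsf m_{\kappa,\Lambda}(f)=\int|k|^{-3/2}\mathbf 1_{\{\kappa\le|k|\le\Lambda\}}\hat f\,dk$, $\mathsf M_{\kappa,\Lambda,t}(f)=\operatorname{Re}\mathsf m_{\kappa,\Lambda}((e^{it\omega}-1)f)$, $\mathsf M_t(f)=\operatorname{Re}\mathsf m((e^{it\omega}-1)f)$. The resolvent algebra $\mathcal R(X,\sigma)$ (Buchholz–Grundling) over the real symplectic space $X=\operatorname{dom}\mathsf m$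 with $\sigma(f,g)=\operatorname{Im}\langle f,g\rangle$ is the universal C*-algebra generated by elements $R(\lambda,f)$, $\lambda\in\mathbb R\setminus\{0\}$, $f\in X$, subject to: $R(\lambda,0)=-\frac i\lambda 1$; $R(\lambda,f)^*=R(-\lambda,f)$; $\nu R(\nu\lambda,\nu f)=R(\lambda,f)$ ($\nu\ne0$); $R(\lambda,f)-R(\mu,f)=i(\mu-\lambda)R(\lambda,f)R(\mu,f)$; $[R(\lambda,f),R(\mu,g)]=i\sigma(f,g)R(\lambda,f)R(\mu,g)^2R(\lambda,f)$; $R(\lambda,f)R(\mu,g)=R(\lambda+\mu,f+g)\big(R(\lambda,f)+R(\mu,g)+i\sigma(f,g)R(\lambda,f)^2R(\mu,g)\big)$ ($\lambda+\mu\ne0$). $R(\lambda,f)$ is analytic in $\lambda$ and extends to $R(z,f)$ for $z\in\mathbb C$ with $\operatorname{Re}z\ne0$ (satisfying the same relations, with $R(z,f)^*=R(-\bar z,f)$), and $\|R(z,f)\|\le1/|\operatorname{Re}z|$. In a regular representation $R(z,f)$ is represented by $(iz-\Phi(f))^{-1}$. *)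

theory Defs
  imports "HOL-Analysis.Analysis"
begin

text \<open>Elements f of L2(R3) are represented by their Fourier transforms hat f :: real^3 => complex.
  All data in the statement (inner product, m, e^{it omega}) are expressed through hat f,
  so we work directly with hat f.\<close>

definition dom_m :: "(real^3 \<Rightarrow> complex) set" where
  "dom_m = {f. f \<in> borel_measurable lborel
              \<and> integrable lborel (\<lambda>k. (norm (f k))\<^sup>2)
              \<and> integrable lborel (\<lambda>k. norm (f k) * norm k powr (-3/2))}"

definition l2_inner :: "(real^3 \<Rightarrow> complex) \<Rightarrow> (real^3 \<Rightarrow> complex) \<Rightarrow> complex" where
  "l2_inner f g = (LINT k|lborel. cnj (f k) * g k)"

definition symp :: "(real^3 \<Rightarrow> complex) \<Rightarrow> (real^3 \<Rightarrow> complex) \<Rightarrow> real" where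
  "symp f g = Im (l2_inner f g)"

definition mfun :: "(real^3 \<Rightarrow> complex) \<Rightarrow> complex" where
  "mfun f = (LINT k|lborel. complex_of_real (norm k powr (-3/2)) * f k)"

definition mfun_cut :: "real \<Rightarrow> real \<Rightarrow> (real^3 \<Rightarrow> complex) \<Rightarrow> complex" where
  "mfun_cut \<kappa> \<Lambda> f = (LINT k|lborel. complex_of_real (norm k powr (-3/2)
        * indicator {k. \<kappa> \<le> norm k \<and> norm k \<le> \<Lambda>} k) * f k)"

definition evol :: "real \<Rightarrow> (real^3 \<Rightarrow> complex) \<Rightarrow> (real^3 \<Rightarrow> complex)" where
  "evol t f = (\<lambda>k. exp (\<i> * complex_of_real (t * norm k)) * f k)"

definition Mfun :: "real \<Rightarrow> (real^3 \<Rightarrow> complex) \<Rightarrow> real" where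
  "Mfun t f = Re (mfun (\<lambda>k. evol t f k - f k))"

definition Mfun_cut :: "real \<Rightarrow> real \<Rightarrow> real \<Rightarrow> (real^3 \<Rightarrow> complex) \<Rightarrow> real" where
  "Mfun_cut \<kappa> \<Lambda> t f = Re (mfun_cut \<kappa> \<Lambda> (\<lambda>k. evol t f k - f k))"

text \<open>A unital complex C*-algebra is encoded as a real Banach algebra with unit (type class),
  together with an involution st and a central element j with j*j = -1 playing the role of
  the imaginary unit (complex scalar multiplication is then c.x = Re c x + Im c (j x)).\<close>

definition cstar_algebra :: "('a::{real_normed_algebra_1,banach} \<Rightarrow> 'a) \<Rightarrow> 'a \<Rightarrow> bool" where
  "cstar_algebra st j \<longleftrightarrow>
     j * j = - 1 \<and> (\<forall>x. j * x = x * j) \<and>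
     (\<forall>x. st (st x) = x) \<and> (\<forall>x y. st (x + y) = st x + st y) \<and>
     (\<forall>r x. st (r *\<^sub>R x) = r *\<^sub>R st x) \<and> (\<forall>x. st (j * x) = - (j * st x)) \<and>
     (\<forall>x y. st (x * y) = st y * st x) \<and>
     (\<forall>x. norm (st x * x) = (norm x)\<^sup>2)"

definition cscale :: "'a::real_normed_algebra_1 \<Rightarrow> complex \<Rightarrow> 'a \<Rightarrow> 'a" where
  "cscale j c x = Re c *\<^sub>R x + Im c *\<^sub>R (j * x)"

definition star_automorphism ::
  "('a::{real_normed_algebra_1,banach} \<Rightarrow> 'a) \<Rightarrow> 'a \<Rightarrow> ('a \<Rightarrow> 'a) \<Rightarrow> bool" where
  "star_automorphism st j \<alpha> \<longleftrightarrow> bij \<alpha> \<and>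
     (\<forall>x y. \<alpha> (x + y) = \<alpha> x + \<alpha> y) \<and> (\<forall>r x. \<alpha> (r *\<^sub>R x) = r *\<^sub>R \<alpha> x) \<and>
     (\<forall>x. \<alpha> (j * x) = j * \<alpha> x) \<and> (\<forall>x y. \<alpha> (x * y) = \<alpha> x * \<alpha> y) \<and>
     (\<forall>x. \<alpha> (st x) = st (\<alpha> x)) \<and> \<alpha> 1 = 1"

text \<open>R z f, for Re z ~= 0 and f in dom m, satisfying the Buchholz--Grundling relations
  (in their extension to complex z), the norm bound, and depending on f only through its
  L2 class (f = g a.e.).\<close>

definition resolvent_family ::
  "('a::{real_normed_algebra_1,banach} \<Rightarrow> 'a) \<Rightarrow> 'a \<Rightarrow> (complex \<Rightarrow> (real^3 \<Rightarrow> complex) \<Rightarrow> 'a) \<Rightarrow> bool" where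
  "resolvent_family st j R \<longleftrightarrow>
     (\<forall>z f g. Re z \<noteq> 0 \<longrightarrow> f \<in> dom_m \<longrightarrow> g \<in> dom_m \<longrightarrow> (AE k in lborel. f k = g k)
         \<longrightarrow> R z f = R z g) \<and>
     (\<forall>z. Re z \<noteq> 0 \<longrightarrow> R z (\<lambda>k. 0) = cscale j (- \<i> / z) 1) \<and>
     (\<forall>z f. Re z \<noteq> 0 \<longrightarrow> f \<in> dom_m \<longrightarrow> st (R z f) = R (- cnj z) f) \<and>
     (\<forall>z f \<nu>::real. Re z \<noteq> 0 \<longrightarrow> f \<in> dom_m \<longrightarrow> \<nu> \<noteq> 0 \<longrightarrow>
         \<nu> *\<^sub>R R (of_real \<nu> * z) (\<lambda>k. of_real \<nu> * f k) = R z f) \<and>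
     (\<forall>z w f. Re z \<noteq> 0 \<longrightarrow> Re w \<noteq> 0 \<longrightarrow> f \<in> dom_m \<longrightarrow>
         R z f - R w f = cscale j (\<i> * (w - z)) (R z f * R w f)) \<and>
     (\<forall>z w f g. Re z \<noteq> 0 \<longrightarrow> Re w \<noteq> 0 \<longrightarrow> f \<in> dom_m \<longrightarrow> g \<in> dom_m \<longrightarrow>
         R z f * R w g - R w g * R z f
           = cscale j (\<i> * of_real (symp f g)) (R z f * R w g * R w g * R z f)) \<and>
     (\<forall>z w f g. Re z \<noteq> 0 \<longrightarrow> Re w \<noteq> 0 \<longrightarrow> Re (z + w) \<noteq> 0 \<longrightarrow> f \<in> dom_m \<longrightarrow> g \<in> dom_m \<longrightarrow>
         R z f * R w g = R (z + w) (\<lambda>k. f k + g k) *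
            (R z f + R w g + cscale j (\<i> * of_real (symp f g)) (R z f * R z f * R w g))) \<and>
     (\<forall>z f. Re z \<noteq> 0 \<longrightarrow> f \<in> dom_m \<longrightarrow> norm (R z f) \<le> 1 / \<bar>Re z\<bar>)"

inductive_set star_alg_gen ::
  "('a::{real_normed_algebra_1,banach} \<Rightarrow> 'a) \<Rightarrow> 'a \<Rightarrow> (complex \<Rightarrow> (real^3 \<Rightarrow> complex) \<Rightarrow> 'a) \<Rightarrow> 'a set"
  for st j R where
  gen: "l \<noteq> 0 \<Longrightarrow> f \<in> dom_m \<Longrightarrow> R (complex_of_real l) f \<in> star_alg_gen st j R"
| one: "1 \<in> star_alg_gen st j R"
| add: "x \<in> star_alg_gen st j R \<Longrightarrow> y \<in> star_alg_gen st j R \<Longrightarrow> x + y \<in> star_alg_gen st j R"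
| mult: "x \<in> star_alg_gen st j R \<Longrightarrow> y \<in> star_alg_gen st j R \<Longrightarrow> x * y \<in> star_alg_gen st j R"
| scaleR: "x \<in> star_alg_gen st j R \<Longrightarrow> r *\<^sub>R x \<in> star_alg_gen st j R"
| multj: "x \<in> star_alg_gen st j R \<Longrightarrow> j * x \<in> star_alg_gen st j R"
| star: "x \<in> star_alg_gen st j R \<Longrightarrow> st x \<in> star_alg_gen st j R"

end

theory Submission
  imports Defs
begin

(* Both dynamics act on a generator R(l, f) by the same substitution f := e^{it omega} f and by
   shifting the spectral parameter by i M_{kappa,Lambda,t}(f), resp. i M_t(f). By the resolvent
   identity the two images differ in norm by at most |M_{kappa,Lambda,t}(f) - M_t(f)| / l^2, and
   this is bounded, uniformly in t, by twice the part of the integral of |hat f| |k|^(-3/2) outside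
   the shell kappa <= |k| <= Lambda, which vanishes in the limit by dominated convergence.
   Star automorphisms of a C*-algebra are contractive, so the elements on which the cut-off
   dynamics converges uniformly in t form a closed *-subalgebra; it contains the generators,
   hence the whole algebra. *)

section \<open>Infrared and ultraviolet tails\<close>

lemma shell_measurable [measurable]:
  "{k::real^3. \<kappa> \<le> norm k \<and> norm k \<le> \<Lambda>} \<in> sets lborel"
proof -
  have "closed {k::real^3. \<kappa> \<le> norm k \<and> norm k \<le> \<Lambda>}"
    by (intro closed_Collect_conj closed_Collect_le continuous_intros)
  then show ?thesis by simp
qed

lemma evol_measurable [measurable]:
  assumes [measurable]: "f \<in> borel_measurable lborel"
  shows "evol t f \<in> borel_measurable lborel"
  unfolding evol_def by measurable

lemma norm_evol [simp]: "norm (evol t f k) = norm (f k)"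
  by (simp add: evol_def norm_mult)

lemma evol_in_dom_m: "f \<in> dom_m \<Longrightarrow> evol t f \<in> dom_m"
  using evol_measurable[of f t] by (auto simp: dom_m_def)

lemma dom_mD:
  assumes "f \<in> dom_m"
  shows "f \<in> borel_measurable lborel" "integrable lborel (\<lambda>k. norm (f k) * norm k powr (-3/2))"
  using assms by (auto simp: dom_m_def)

definition m_tail :: "real \<Rightarrow> real \<Rightarrow> (real^3 \<Rightarrow> complex) \<Rightarrow> real" where
  "m_tail \<kappa> \<Lambda> g = (LINT k|lborel. norm k powr (-3/2)
      * (1 - indicator {k. \<kappa> \<le> norm k \<and> norm k \<le> \<Lambda>} k) * norm (g k))"

context
  fixes g :: "real^3 \<Rightarrow> complex"
  assumes g_measurable [measurable]: "g \<in> borel_measurable lborel"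
    and g_weighted: "integrable lborel (\<lambda>k. norm (g k) * norm k powr (-3/2))"
begin

lemma integrable_m_tail:
  "integrable lborel (\<lambda>k. norm k powr (-3/2)
      * (1 - indicator {k. \<kappa> \<le> norm k \<and> norm k \<le> \<Lambda>} k) * norm (g k))"
  by (rule Bochner_Integration.integrable_bound[OF g_weighted]) (auto simp: indicator_def)

lemma m_tail_nonneg: "0 \<le> m_tail \<kappa> \<Lambda> g"
  unfolding m_tail_def by (intro integral_nonneg_AE) (auto simp: indicator_def)

lemma norm_mfun_cut_diff_le: "norm (mfun_cut \<kappa> \<Lambda> g - mfun g) \<le> m_tail \<kappa> \<Lambda> g"
proof -
  define I where "I = {k::real^3. \<kappa> \<le> norm k \<and> norm k \<le> \<Lambda>}"
  define w where "w k = norm k powr (-3/2)" for k :: "real^3"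
  have [measurable]: "I \<in> sets lborel" unfolding I_def by measurable
  have "integrable lborel (\<lambda>k. complex_of_real (w k * indicator I k) * g k)"
    by (rule Bochner_Integration.integrable_bound[OF g_weighted])
      (auto simp: w_def norm_mult indicator_def)
  moreover have "integrable lborel (\<lambda>k. complex_of_real (w k) * g k)"
    by (rule Bochner_Integration.integrable_bound[OF g_weighted]) (auto simp: w_def norm_mult)
  ultimately have "mfun_cut \<kappa> \<Lambda> g - mfun g
      = (LINT k|lborel. - complex_of_real (w k * (1 - indicator I k)) * g k)"
    unfolding mfun_cut_def mfun_def w_def[symmetric] I_def[symmetric]
    by (subst Bochner_Integration.integral_diff[symmetric]) (auto simp: algebra_simps)
  also have "norm \<dots> \<le> (LINT k|lborel. norm (- complex_of_real (w k * (1 - indicator I k)) * g k))"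
    by (rule integral_norm_bound)
  also have "\<dots> = m_tail \<kappa> \<Lambda> g"
    unfolding m_tail_def w_def I_def
    by (intro Bochner_Integration.integral_cong) (auto simp: norm_mult indicator_def)
  finally show ?thesis .
qed

lemma m_tail_mono:
  assumes "\<kappa> \<le> \<kappa>'" "\<Lambda>' \<le> \<Lambda>"
  shows "m_tail \<kappa> \<Lambda> g \<le> m_tail \<kappa>' \<Lambda>' g"
  unfolding m_tail_def
  by (intro integral_mono integrable_m_tail mult_right_mono mult_left_mono)
    (use assms in \<open>auto simp: indicator_def\<close>)

lemma m_tail_LIMSEQ: "(\<lambda>n. m_tail (inverse (Suc n)) (Suc n) g) \<longlonglongrightarrow> 0"
proof -
  define s where "s n = (\<lambda>k::real^3. norm k powr (-3/2)
      * (1 - indicator {k. inverse (Suc n) \<le> norm k \<and> norm k \<le> Suc n} k) * norm (g k))"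
    for n :: nat
  have [measurable]: "s n \<in> borel_measurable lborel" for n
    unfolding s_def by measurable
  have "(\<lambda>n. integral\<^sup>L lborel (s n)) \<longlonglongrightarrow> integral\<^sup>L lborel (\<lambda>k::real^3. 0::real)"
  proof (rule integral_dominated_convergence[OF _ _ g_weighted])
    show "AE k in lborel. (\<lambda>n. s n k) \<longlonglongrightarrow> 0"
    proof (rule AE_I2)
      fix k :: "real^3"
      show "(\<lambda>n. s n k) \<longlonglongrightarrow> 0"
      proof (cases "k = 0")
        case False
        obtain N where "norm k \<le> real N" using real_arch_simple by blast
        then have "eventually (\<lambda>n. norm k \<le> Suc n) sequentially"
          by (auto simp: eventually_sequentially intro: exI[of _ N])
        moreover have "eventually (\<lambda>n. inverse (Suc n) < norm k) sequentially"
          using False by (intro order_tendstoD(2)[OF LIMSEQ_inverse_real_of_nat]) simp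
        ultimately show ?thesis
          by (intro tendsto_eventually, eventually_elim) (simp add: s_def indicator_def)
      qed (simp add: s_def)
    qed
  qed (auto simp: s_def indicator_def)
  then show ?thesis by (simp add: m_tail_def s_def)
qed

lemma m_tail_tendsto_0: "((\<lambda>p. m_tail (fst p) (snd p) g) \<longlongrightarrow> 0) (at_right 0 \<times>\<^sub>F at_top)"
proof (rule order_tendstoI)
  fix a :: real assume "a < 0"
  then show "eventually (\<lambda>p. a < m_tail (fst p) (snd p) g) (at_right 0 \<times>\<^sub>F at_top)"
    using m_tail_nonneg by (intro always_eventually) (auto intro: less_le_trans)
next
  fix \<epsilon> :: real assume "0 < \<epsilon>"
  then obtain N where N: "m_tail (inverse (Suc N)) (Suc N) g < \<epsilon>"
    using order_tendstoD(2)[OF m_tail_LIMSEQ] by (auto simp: eventually_sequentially)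
  have "eventually (\<lambda>\<kappa>::real. \<kappa> < inverse (Suc N)) (at_right 0)"
    by (intro eventually_at_rightI[of _ "inverse (Suc N)"]) auto
  moreover have "eventually (\<lambda>\<Lambda>::real. Suc N < \<Lambda>) at_top"
    by (rule eventually_gt_at_top)
  ultimately show "eventually (\<lambda>p. m_tail (fst p) (snd p) g < \<epsilon>) (at_right 0 \<times>\<^sub>F at_top)"
  proof (rule eventually_prodI[THEN eventually_mono])
    fix p :: "real \<times> real" assume "fst p < inverse (Suc N) \<and> Suc N < snd p"
    then have "m_tail (fst p) (snd p) g \<le> m_tail (inverse (Suc N)) (Suc N) g"
      by (intro m_tail_mono) auto
    with N show "m_tail (fst p) (snd p) g < \<epsilon>" by simp
  qed
qed

end

lemma Mfun_cut_diff_le: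
  assumes "f \<in> dom_m"
  shows "\<bar>Mfun_cut \<kappa> \<Lambda> t f - Mfun t f\<bar> \<le> 2 * m_tail \<kappa> \<Lambda> f"
proof -
  note [measurable] = dom_mD(1)[OF assms] and f_weighted = dom_mD(2)[OF assms]
  define g where "g k = evol t f k - f k" for k
  have g_le: "norm (g k) \<le> 2 * norm (f k)" for k
    using norm_triangle_ineq4[of "evol t f k" "f k"] by (simp add: g_def)
  have [measurable]: "g \<in> borel_measurable lborel"
    unfolding g_def by measurable
  have g_weighted_le: "norm k powr (-3/2) * norm (g k) \<le> 2 * (norm k powr (-3/2) * norm (f k))"
    for k using mult_left_mono[OF g_le[of k], of "norm k powr (-3/2)"] by simp
  then have g_weighted: "integrable lborel (\<lambda>k. norm (g k) * norm k powr (-3/2))"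
    by (intro Bochner_Integration.integrable_bound[OF integrable_mult_left[OF f_weighted, of 2]])
      (auto simp: mult_ac)
  have "\<bar>Mfun_cut \<kappa> \<Lambda> t f - Mfun t f\<bar> = \<bar>Re (mfun_cut \<kappa> \<Lambda> g - mfun g)\<bar>"
    by (simp add: Mfun_cut_def Mfun_def g_def[abs_def])
  also have "\<dots> \<le> m_tail \<kappa> \<Lambda> g"
    using abs_Re_le_cmod norm_mfun_cut_diff_le[OF _ g_weighted] by (rule order_trans) simp
  also have "\<dots> \<le> (LINT k|lborel. 2 * (norm k powr (-3/2)
      * (1 - indicator {k. \<kappa> \<le> norm k \<and> norm k \<le> \<Lambda>} k) * norm (f k)))"
    unfolding m_tail_def
    by (intro integral_mono integrable_m_tail[OF _ g_weighted] integrable_mult_right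
        integrable_m_tail[OF _ f_weighted])
      (auto simp: indicator_def intro: g_weighted_le[simplified])
  also have "\<dots> = 2 * m_tail \<kappa> \<Lambda> f"
    by (simp add: m_tail_def)
  finally show ?thesis .
qed

section \<open>Uniform limits of families of maps\<close>

lemma uniform_limit_dist_le_tendsto_0:
  assumes "\<forall>\<^sub>F p in F. \<forall>x\<in>S. dist (f p x) (l x) \<le> g p" and "(g \<longlongrightarrow> 0) F"
  shows "uniform_limit S f l F"
proof (rule uniform_limitI)
  fix e :: real assume "0 < e"
  with assms(2) have "\<forall>\<^sub>F p in F. g p < e"
    by (rule order_tendstoD)
  with assms(1) show "\<forall>\<^sub>F p in F. \<forall>x\<in>S. dist (f p x) (l x) < e"
    by eventually_elim (auto intro: le_less_trans)
qed

lemma uniform_limit_imp_SUP_dist_tendsto_0: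
  assumes lim: "uniform_limit S f l F" and "S \<noteq> {}"
  shows "((\<lambda>p. SUP x\<in>S. dist (f p x) (l x)) \<longlongrightarrow> 0) F"
proof (rule tendstoI)
  fix e :: real assume "0 < e"
  then have "\<forall>\<^sub>F p in F. \<forall>x\<in>S. dist (f p x) (l x) < e / 2"
    using uniform_limitD[OF lim, of "e / 2"] by simp
  then show "\<forall>\<^sub>F p in F. dist (SUP x\<in>S. dist (f p x) (l x)) 0 < e"
  proof eventually_elim
    case (elim p)
    then have "(SUP x\<in>S. dist (f p x) (l x)) \<le> e / 2"
      using \<open>S \<noteq> {}\<close> by (intro cSUP_least) (auto intro: less_imp_le)
    moreover obtain x where "x \<in> S"
      using \<open>S \<noteq> {}\<close> by blast
    with elim have "dist (f p x) (l x) \<le> (SUP x\<in>S. dist (f p x) (l x))"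
      by (intro cSUP_upper bdd_aboveI2[of _ _ "e / 2"]) (auto intro: less_imp_le)
    then have "0 \<le> (SUP x\<in>S. dist (f p x) (l x))"
      by (rule order_trans[OF zero_le_dist])
    ultimately show ?case
      using \<open>0 < e\<close> by (simp add: dist_real_def)
  qed
qed

lemma closed_uniform_limit_nonexpansive:
  assumes \<Phi>: "\<forall>\<^sub>F p in F. \<forall>t\<in>S. \<forall>x y. dist (\<Phi> p t x) (\<Phi> p t y) \<le> dist x y"
    and \<Psi>: "\<And>t x y. t \<in> S \<Longrightarrow> dist (\<Psi> t x) (\<Psi> t y) \<le> dist x y"
  shows "closed {x. uniform_limit S (\<lambda>p t. \<Phi> p t x) (\<lambda>t. \<Psi> t x) F}"
  unfolding closure_subset_eq[symmetric]
proof (intro subsetI CollectI uniform_limitI)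
  fix x and e :: real
  assume "x \<in> closure {x. uniform_limit S (\<lambda>p t. \<Phi> p t x) (\<lambda>t. \<Psi> t x) F}" "0 < e"
  then obtain y where y: "uniform_limit S (\<lambda>p t. \<Phi> p t y) (\<lambda>t. \<Psi> t y) F" "dist y x < e / 3"
    unfolding closure_approachable by (auto dest!: spec[of _ "e / 3"])
  have "\<forall>\<^sub>F p in F. \<forall>t\<in>S. dist (\<Phi> p t y) (\<Psi> t y) < e / 3"
    using uniform_limitD[OF y(1), of "e / 3"] \<open>0 < e\<close> by simp
  from this \<Phi> show "\<forall>\<^sub>F p in F. \<forall>t\<in>S. dist (\<Phi> p t x) (\<Psi> t x) < e"
  proof eventually_elim
    case (elim p)
    show ?case
    proof
      fix t assume "t \<in> S"
      have "dist (\<Phi> p t x) (\<Psi> t x)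
          \<le> dist (\<Phi> p t x) (\<Phi> p t y) + dist (\<Phi> p t y) (\<Psi> t y) + dist (\<Psi> t y) (\<Psi> t x)"
        by (meson add_mono dist_triangle order_trans order_refl)
      moreover have "dist (\<Phi> p t x) (\<Phi> p t y) \<le> dist x y" "dist (\<Phi> p t y) (\<Psi> t y) < e / 3"
        using elim \<open>t \<in> S\<close> by blast+
      moreover have "dist (\<Psi> t y) (\<Psi> t x) \<le> dist x y"
        using \<Psi>[OF \<open>t \<in> S\<close>, of y x] by (simp add: dist_commute)
      ultimately show "dist (\<Phi> p t x) (\<Psi> t x) < e"
        using y(2) by (simp add: dist_commute)
    qed
  qed
qed

section \<open>C*-algebras and resolvents\<close>

lemma star_automorphismD:
  assumes "star_automorphism st j \<phi>"
  shows "\<phi> (x + y) = \<phi> x + \<phi> y" "\<phi> (r *\<^sub>R x) = r *\<^sub>R \<phi> x" "\<phi> (j * x) = j * \<phi> x"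
    "\<phi> (x * y) = \<phi> x * \<phi> y" "\<phi> (st x) = st (\<phi> x)" "\<phi> 1 = 1"
  using assms unfolding star_automorphism_def by blast+

lemma star_automorphism_diff:
  assumes "star_automorphism st j \<phi>"
  shows "\<phi> (x - y) = \<phi> x - \<phi> y"
  using star_automorphismD(1)[OF assms, of "x - y" y] by (simp add: eq_diff_eq)

locale cstar =
  fixes st :: "'a::{real_normed_algebra_1,banach} \<Rightarrow> 'a" and j :: 'a
  assumes cstar_algebra: "cstar_algebra st j"
begin

lemma j_mult_j: "j * j = - 1"
  and j_commute: "j * x = x * j"
  and star_star [simp]: "st (st x) = x"
  and star_add: "st (x + y) = st x + st y"
  and star_scaleR: "st (r *\<^sub>R x) = r *\<^sub>R st x"
  and star_j_mult: "st (j * x) = - (j * st x)"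
  and star_mult: "st (x * y) = st y * st x"
  and norm_star_mult_self: "norm (st x * x) = (norm x)\<^sup>2"
  using cstar_algebra unfolding cstar_algebra_def by blast+

lemma star_zero [simp]: "st 0 = 0"
  using star_scaleR[of 0 0] by simp

lemma star_minus: "st (- x) = - st x"
  using star_scaleR[of "-1" x] by simp

lemma star_diff: "st (x - y) = st x - st y"
  using star_add[of x "- y"] by (simp add: star_minus)

lemma star_one [simp]: "st 1 = 1"
  using star_mult[of "st 1" 1] by simp

lemma star_j: "st j = - j"
  using star_j_mult[of 1] by simp

lemma norm_star [simp]: "norm (st x) = norm x"
proof -
  have "norm x \<le> norm (st x)" for x
  proof (cases "x = 0")
    case False
    have "(norm x)\<^sup>2 \<le> norm (st x) * norm x"
      using norm_star_mult_self[of x] norm_mult_ineq[of "st x" x] by simp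
    with False show ?thesis by (simp add: power2_eq_square)
  qed simp
  from this[of x] this[of "st x"] show ?thesis by simp
qed

lemma bounded_linear_star: "bounded_linear st"
  by (rule bounded_linear_intro[where K=1]) (auto simp: star_add star_scaleR)

lemma norm_cscale_le: "norm (cscale j c x) \<le> cmod c * norm x"
proof -
  define u where "u = Re c *\<^sub>R 1 + Im c *\<^sub>R j"
  have "st u * u = (Re c *\<^sub>R 1 - Im c *\<^sub>R j) * (Re c *\<^sub>R 1 + Im c *\<^sub>R j)"
    by (simp add: u_def star_add star_scaleR star_j)
  also have "\<dots> = ((Re c)\<^sup>2 + (Im c)\<^sup>2) *\<^sub>R 1"
    by (simp add: algebra_simps j_mult_j power2_eq_square)
  finally have "(norm u)\<^sup>2 = (cmod c)\<^sup>2"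
    by (simp flip: norm_star_mult_self add: cmod_power2)
  then have "norm u = cmod c"
    by (simp add: power2_eq_iff_nonneg)
  moreover have "cscale j c x = u * x"
    by (simp add: cscale_def u_def algebra_simps)
  ultimately show ?thesis
    using norm_mult_ineq[of u x] by simp
qed

text \<open>The square root is \<open>1 - s\<close>, where \<open>s\<close> is the fixed point of the contraction
  \<open>s \<mapsto> (a\<^sup>2 + s\<^sup>2) / 2\<close> on the self-adjoint elements of norm at most \<open>\<parallel>a\<parallel>\<close>
  that commute with \<open>a\<close>.\<close>
lemma selfadjoint_sqrt_one_minus_square:
  assumes sa: "st a = a" and na: "norm a < 1"
  shows "\<exists>y. st y = y \<and> y * a = a * y \<and> y * y = 1 - a * a"
proof -
  define S where "S = {s. norm s \<le> norm a \<and> st s = s \<and> s * a = a * s}"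
  define F where "F s = (1/2::real) *\<^sub>R (a * a + s * s)" for s
  have "closed S"
    unfolding S_def using linear_continuous_on[OF bounded_linear_star]
    by (intro closed_Collect_conj closed_Collect_le closed_Collect_eq continuous_intros)
  then have "complete S"
    by (simp add: complete_eq_closed)
  moreover have "0 \<in> S"
    by (simp add: S_def)
  moreover have "F ` S \<subseteq> S"
  proof safe
    fix s assume "s \<in> S"
    then have s: "norm s \<le> norm a" "st s = s" "s * a = a * s"
      by (auto simp: S_def)
    have "norm (a * a + s * s) \<le> norm a * norm a + norm s * norm s"
      by (meson add_mono norm_mult_ineq norm_triangle_le)
    also have "\<dots> \<le> 2 * norm a"
      using s(1) na mult_mono[OF s(1) s(1)] mult_left_le_one_le[of "norm a" "norm a"] by simp
    finally have "norm (F s) \<le> norm a"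
      by (simp add: F_def)
    moreover have "st (F s) = F s"
      by (simp add: F_def star_add star_scaleR star_mult sa s(2))
    moreover have "F s * a = a * F s"
      by (simp add: F_def algebra_simps mult.assoc s(3)) (simp flip: mult.assoc add: s(3))
    ultimately show "F s \<in> S"
      by (simp add: S_def)
  qed
  moreover have "dist (F x) (F y) \<le> norm a * dist x y" if "x \<in> S" "y \<in> S" for x y
  proof -
    have "F x - F y = (1/2::real) *\<^sub>R (x * (x - y) + (x - y) * y)"
      by (simp add: F_def algebra_simps)
    moreover have "norm (x * (x - y) + (x - y) * y) \<le> (norm x + norm y) * norm (x - y)"
      by (metis add_mono distrib_right mult.commute norm_mult_ineq norm_triangle_le)
    moreover have "norm x + norm y \<le> 2 * norm a"
      using that by (simp add: S_def)
    ultimately show ?thesis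
      using mult_right_mono[of "norm x + norm y" "2 * norm a" "norm (x - y)"]
      by (simp add: dist_norm)
  qed
  ultimately obtain s where s: "s \<in> S" "F s = s"
    using Banach_fix[of S "norm a" F] na by auto
  then have "a * a + s * s = 2 *\<^sub>R s"
    by (metis F_def scaleR_half_double scaleR_add_right scaleR_2 add_diff_cancel)
  with s(1) show ?thesis
    by (intro exI[of _ "1 - s"]) (auto simp: S_def star_diff algebra_simps scaleR_2)
qed

text \<open>A self-adjoint \<open>a\<close> with \<open>\<parallel>a\<parallel> < 1\<close> is the real part of the unitary
  \<open>u = a + j y\<close>, \<open>y\<^sup>2 = 1 - a\<^sup>2\<close>, and the C*-identity forces \<open>\<parallel>\<phi> u\<parallel> = 1\<close>.\<close>
lemma star_automorphism_norm_selfadjoint_le_1: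
  assumes \<phi>: "star_automorphism st j \<phi>" and sa: "st a = a" and na: "norm a < 1"
  shows "norm (\<phi> a) \<le> 1"
proof -
  obtain y where y: "st y = y" "y * a = a * y" "y * y = 1 - a * a"
    using selfadjoint_sqrt_one_minus_square[OF sa na] by blast
  define u where "u = a + j * y"
  have st_u: "st u = a - j * y"
    by (simp add: u_def star_add star_j_mult y(1) sa)
  have j_left: "x * (j * z) = j * (x * z)" for x z
    by (metis mult.assoc j_commute)
  have "st u * u = a * a + a * (j * y) - (j * y) * a - (j * y) * (j * y)"
    unfolding st_u by (simp add: u_def algebra_simps)
  also have "\<dots> = a * a - (j * j) * (y * y)"
    using j_left[of a y] j_left[of y y] by (simp add: mult.assoc y(2))
  finally have "st u * u = 1"
    by (simp add: j_mult_j y(3))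
  then have "(norm (\<phi> u))\<^sup>2 = 1"
    by (simp flip: norm_star_mult_self star_automorphismD(4,5)[OF \<phi>]
        add: star_automorphismD(6)[OF \<phi>])
  then have "norm (\<phi> u) = 1"
    using norm_ge_zero[of "\<phi> u"] by (auto simp: power2_eq_1_iff)
  have "\<phi> u + st (\<phi> u) = \<phi> (u + st u)"
    by (simp add: star_automorphismD(1,5)[OF \<phi>])
  also have "u + st u = 2 *\<^sub>R a"
    unfolding st_u by (simp add: u_def scaleR_2)
  finally have "\<phi> u + st (\<phi> u) = 2 *\<^sub>R \<phi> a"
    by (simp add: star_automorphismD(2)[OF \<phi>])
  then have "norm (2 *\<^sub>R \<phi> a) \<le> 2"
    using norm_triangle_ineq[of "\<phi> u" "st (\<phi> u)"] \<open>norm (\<phi> u) = 1\<close> by simp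
  then show ?thesis
    by simp
qed

lemma star_automorphism_norm_selfadjoint_le:
  assumes \<phi>: "star_automorphism st j \<phi>" and sa: "st a = a"
  shows "norm (\<phi> a) \<le> norm a"
proof (rule field_le_mult_one_interval)
  fix z :: real assume z: "0 < z" "z < 1"
  show "z * norm (\<phi> a) \<le> norm a"
  proof (cases "a = 0")
    case True
    then show ?thesis
      using star_automorphismD(2)[OF \<phi>, of 0 0] by simp
  next
    case False
    define c where "c = z / norm a"
    have "norm (\<phi> (c *\<^sub>R a)) \<le> 1"
      using False z by (intro star_automorphism_norm_selfadjoint_le_1[OF \<phi>])
        (simp_all add: c_def star_scaleR sa)
    then show ?thesis
      using False z by (simp add: star_automorphismD(2)[OF \<phi>] c_def field_simps)
  qed
qed

lemma star_automorphism_norm_le: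
  assumes \<phi>: "star_automorphism st j \<phi>"
  shows "norm (\<phi> x) \<le> norm x"
proof -
  have "(norm (\<phi> x))\<^sup>2 = norm (\<phi> (st x * x))"
    by (simp flip: norm_star_mult_self add: star_automorphismD(4,5)[OF \<phi>])
  also have "\<dots> \<le> (norm x)\<^sup>2"
    using star_automorphism_norm_selfadjoint_le[OF \<phi>, of "st x * x"]
    by (simp add: star_mult norm_star_mult_self)
  finally show ?thesis
    by (rule power2_le_imp_le) simp
qed

lemma star_automorphism_dist_le:
  "star_automorphism st j \<phi> \<Longrightarrow> dist (\<phi> x) (\<phi> y) \<le> dist x y"
  by (simp add: dist_norm flip: star_automorphism_diff) (rule star_automorphism_norm_le)

lemma norm_resolvent_diff_le:
  assumes R: "resolvent_family st j R" and "Re z \<noteq> 0" "Re w \<noteq> 0" "f \<in> dom_m"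
  shows "norm (R z f - R w f) \<le> cmod (w - z) / (\<bar>Re z\<bar> * \<bar>Re w\<bar>)"
proof -
  have bound: "norm (R v f) \<le> 1 / \<bar>Re v\<bar>" if "Re v \<noteq> 0" for v
    using R that assms(4) unfolding resolvent_family_def by blast
  have "R z f - R w f = cscale j (\<i> * (w - z)) (R z f * R w f)"
    using R assms(2-) unfolding resolvent_family_def by blast
  also have "norm \<dots> \<le> cmod (w - z) * (norm (R z f) * norm (R w f))"
    using norm_cscale_le[of "\<i> * (w - z)"] norm_mult_ineq[of "R z f" "R w f"]
    by (simp add: norm_mult) (meson mult_left_mono norm_ge_zero order_trans)
  also have "\<dots> \<le> cmod (w - z) * (1 / \<bar>Re z\<bar> * (1 / \<bar>Re w\<bar>))"
    using assms(2,3) by (intro mult_left_mono mult_mono bound) auto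
  finally show ?thesis
    by simp
qed

lemma dist_resolvent_Mfun_cut_Mfun_le:
  assumes R: "resolvent_family st j R" and "l \<noteq> 0" "f \<in> dom_m"
  shows "dist (R (of_real l + \<i> * of_real (Mfun_cut \<kappa> \<Lambda> t f)) (evol t f))
      (R (of_real l + \<i> * of_real (Mfun t f)) (evol t f)) \<le> 2 * m_tail \<kappa> \<Lambda> f / l\<^sup>2"
proof -
  define z where "z = of_real l + \<i> * of_real (Mfun_cut \<kappa> \<Lambda> t f)"
  define w where "w = of_real l + \<i> * of_real (Mfun t f)"
  have "cmod (w - z) = \<bar>Mfun_cut \<kappa> \<Lambda> t f - Mfun t f\<bar>"
    unfolding z_def w_def
    by (simp add: norm_mult flip: of_real_diff right_diff_distrib)
  then have "dist (R z (evol t f)) (R w (evol t f)) \<le> \<bar>Mfun_cut \<kappa> \<Lambda> t f - Mfun t f\<bar> / l\<^sup>2"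
    using norm_resolvent_diff_le[OF R, of z w "evol t f"] assms(2,3)
    by (simp add: z_def w_def dist_norm evol_in_dom_m power2_eq_square abs_mult_self_eq)
  also have "\<dots> \<le> 2 * m_tail \<kappa> \<Lambda> f / l\<^sup>2"
    using Mfun_cut_diff_le[OF assms(3)] by (simp add: divide_right_mono)
  finally show ?thesis
    by (simp add: z_def w_def)
qed

lemma uniform_limit_resolvent_Mfun_cut:
  assumes R: "resolvent_family st j R" and "l \<noteq> 0" "f \<in> dom_m"
  shows "uniform_limit UNIV
      (\<lambda>p t. R (of_real l + \<i> * of_real (Mfun_cut (fst p) (snd p) t f)) (evol t f))
      (\<lambda>t. R (of_real l + \<i> * of_real (Mfun t f)) (evol t f)) (at_right 0 \<times>\<^sub>F at_top)"
proof (rule uniform_limit_dist_le_tendsto_0)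
  show "\<forall>\<^sub>F p in at_right 0 \<times>\<^sub>F at_top. \<forall>t\<in>UNIV.
      dist (R (of_real l + \<i> * of_real (Mfun_cut (fst p) (snd p) t f)) (evol t f))
        (R (of_real l + \<i> * of_real (Mfun t f)) (evol t f)) \<le> 2 * m_tail (fst p) (snd p) f / l\<^sup>2"
    by (intro always_eventually allI ballI dist_resolvent_Mfun_cut_Mfun_le[OF assms])
  show "((\<lambda>p. 2 * m_tail (fst p) (snd p) f / l\<^sup>2) \<longlongrightarrow> 0) (at_right 0 \<times>\<^sub>F at_top)"
    using m_tail_tendsto_0[OF dom_mD[OF assms(3)]]
    by (intro tendsto_divide_zero tendsto_mult_right_zero)
qed

lemma uniform_limit_star_alg_gen:
  assumes \<Phi>: "\<forall>\<^sub>F p in F. \<forall>t. star_automorphism st j (\<Phi> p t)"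
    and \<Psi>: "\<And>t. star_automorphism st j (\<Psi> t)"
    and generators: "\<And>l f. l \<noteq> 0 \<Longrightarrow> f \<in> dom_m \<Longrightarrow>
      uniform_limit UNIV (\<lambda>p t. \<Phi> p t (R (of_real l) f)) (\<lambda>t. \<Psi> t (R (of_real l) f)) F"
    and "x \<in> star_alg_gen st j R"
  shows "uniform_limit UNIV (\<lambda>p t. \<Phi> p t x) (\<lambda>t. \<Psi> t x) F"
  using \<open>x \<in> star_alg_gen st j R\<close>
proof induction
  case (gen l f)
  then show ?case
    by (rule generators)
next
  case one
  have "uniform_limit UNIV (\<lambda>p t. 1) (\<lambda>t. 1) F"
    by (rule uniform_limit_const)
  then show ?case
    by (subst uniform_limit_cong[OF \<Phi>[THEN eventually_mono]])
      (auto simp: star_automorphismD(6)[OF \<Psi>] intro: star_automorphismD(6))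
next
  case (add x y)
  have "uniform_limit UNIV (\<lambda>p t. \<Phi> p t x + \<Phi> p t y) (\<lambda>t. \<Psi> t x + \<Psi> t y) F"
    using add.IH by (rule uniform_limit_add)
  then show ?case
    by (subst uniform_limit_cong[OF \<Phi>[THEN eventually_mono]])
      (auto simp: star_automorphismD(1)[OF \<Psi>] intro: star_automorphismD(1))
next
  case (mult x y)
  have "bounded (range (\<lambda>t. \<Psi> t z))" for z
    using star_automorphism_norm_le[OF \<Psi>] by (intro boundedI) blast
  then have "uniform_limit UNIV (\<lambda>p t. \<Phi> p t x * \<Phi> p t y) (\<lambda>t. \<Psi> t x * \<Psi> t y) F"
    using mult.IH by (intro uniform_lim_mult)
  then show ?case
    by (subst uniform_limit_cong[OF \<Phi>[THEN eventually_mono]])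
      (auto simp: star_automorphismD(4)[OF \<Psi>] intro: star_automorphismD(4))
next
  case (scaleR x r)
  have "uniform_limit UNIV (\<lambda>p t. r *\<^sub>R \<Phi> p t x) (\<lambda>t. r *\<^sub>R \<Psi> t x) F"
    using scaleR.IH by (rule bounded_linear.uniform_limit[OF bounded_linear_scaleR_right])
  then show ?case
    by (subst uniform_limit_cong[OF \<Phi>[THEN eventually_mono]])
      (auto simp: star_automorphismD(2)[OF \<Psi>] intro: star_automorphismD(2))
next
  case (multj x)
  have "uniform_limit UNIV (\<lambda>p t. j * \<Phi> p t x) (\<lambda>t. j * \<Psi> t x) F"
    using multj.IH by (rule bounded_linear.uniform_limit[OF bounded_linear_mult_right])
  then show ?case
    by (subst uniform_limit_cong[OF \<Phi>[THEN eventually_mono]])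
      (auto simp: star_automorphismD(3)[OF \<Psi>] intro: star_automorphismD(3))
next
  case (star x)
  have "uniform_limit UNIV (\<lambda>p t. st (\<Phi> p t x)) (\<lambda>t. st (\<Psi> t x)) F"
    using star.IH by (rule bounded_linear.uniform_limit[OF bounded_linear_star])
  then show ?case
    by (subst uniform_limit_cong[OF \<Phi>[THEN eventually_mono]])
      (auto simp: star_automorphismD(5)[OF \<Psi>] intro: star_automorphismD(5))
qed

lemma uniform_limit_closure_star_alg_gen:
  assumes \<Phi>: "\<forall>\<^sub>F p in F. \<forall>t. star_automorphism st j (\<Phi> p t)"
    and \<Psi>: "\<And>t. star_automorphism st j (\<Psi> t)"
    and generators: "\<And>l f. l \<noteq> 0 \<Longrightarrow> f \<in> dom_m \<Longrightarrow>
      uniform_limit UNIV (\<lambda>p t. \<Phi> p t (R (of_real l) f)) (\<lambda>t. \<Psi> t (R (of_real l) f)) F"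
    and "x \<in> closure (star_alg_gen st j R)"
  shows "uniform_limit UNIV (\<lambda>p t. \<Phi> p t x) (\<lambda>t. \<Psi> t x) F"
proof -
  have "closed {x. uniform_limit UNIV (\<lambda>p t. \<Phi> p t x) (\<lambda>t. \<Psi> t x) F}"
    using \<Phi> by (intro closed_uniform_limit_nonexpansive)
      (auto elim!: eventually_mono intro: star_automorphism_dist_le \<Psi>)
  moreover have
    "star_alg_gen st j R \<subseteq> {x. uniform_limit UNIV (\<lambda>p t. \<Phi> p t x) (\<lambda>t. \<Psi> t x) F}"
    using uniform_limit_star_alg_gen[where R=R, OF \<Phi> \<Psi> generators] by blast
  ultimately show ?thesis
    using closure_minimal \<open>x \<in> closure (star_alg_gen st j R)\<close> by blast
qed

end

lemma eventually_cutoffs_ordered: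
  "\<forall>\<^sub>F p in at_right (0::real) \<times>\<^sub>F at_top. 0 < fst p \<and> fst p < snd p"
proof -
  have "\<forall>\<^sub>F \<kappa> in at_right (0::real). 0 < \<kappa> \<and> \<kappa> < 1"
    by (intro eventually_at_rightI[of _ 1]) auto
  moreover have "\<forall>\<^sub>F \<Lambda> in at_top. (1::real) < \<Lambda>"
    by (rule eventually_gt_at_top)
  ultimately show ?thesis
    by (rule eventually_prodI[THEN eventually_mono]) auto
qed

theorem mainTheorem13:
  fixes st :: "'a::{real_normed_algebra_1,banach} \<Rightarrow> 'a" and j :: 'a
    and R :: "complex \<Rightarrow> (real^3 \<Rightarrow> complex) \<Rightarrow> 'a"
    and \<alpha>cut :: "real \<Rightarrow> real \<Rightarrow> real \<Rightarrow> 'a \<Rightarrow> 'a"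
    and \<alpha> :: "real \<Rightarrow> 'a \<Rightarrow> 'a"
    and T :: real and A :: 'a
  assumes cstar: "cstar_algebra st j"
    and res: "resolvent_family st j R"
    and generated: "UNIV = closure (star_alg_gen st j R)"
    and aut_cut: "\<And>\<kappa> \<Lambda> t. 0 < \<kappa> \<Longrightarrow> \<kappa> < \<Lambda> \<Longrightarrow> star_automorphism st j (\<alpha>cut \<kappa> \<Lambda> t)"
    and gen_cut: "\<And>\<kappa> \<Lambda> t z f. 0 < \<kappa> \<Longrightarrow> \<kappa> < \<Lambda> \<Longrightarrow> Re z \<noteq> 0 \<Longrightarrow> f \<in> dom_m \<Longrightarrow>
        \<alpha>cut \<kappa> \<Lambda> t (R z f) = R (z + \<i> * complex_of_real (Mfun_cut \<kappa> \<Lambda> t f)) (evol t f)"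
    and aut: "\<And>t. star_automorphism st j (\<alpha> t)"
    and gen: "\<And>t z f. Re z \<noteq> 0 \<Longrightarrow> f \<in> dom_m \<Longrightarrow>
        \<alpha> t (R z f) = R (z + \<i> * complex_of_real (Mfun t f)) (evol t f)"
    and T: "T > 0"
  shows "((\<lambda>(\<kappa>, \<Lambda>). SUP t\<in>{-T..T}. norm (\<alpha>cut \<kappa> \<Lambda> t A - \<alpha> t A)) \<longlongrightarrow> 0)
           (at_right 0 \<times>\<^sub>F at_top)"
proof -
  interpret cstar st j
    by (rule cstar.intro) (fact cstar)
  let ?F = "at_right (0::real) \<times>\<^sub>F at_top"
  have generators: "uniform_limit UNIV (\<lambda>p t. \<alpha>cut (fst p) (snd p) t (R (of_real l) f))
      (\<lambda>t. \<alpha> t (R (of_real l) f)) ?F" if "l \<noteq> 0" "f \<in> dom_m" for l f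
    using uniform_limit_resolvent_Mfun_cut[OF res that]
    by (subst uniform_limit_cong[OF eventually_cutoffs_ordered[THEN eventually_mono]])
      (auto simp: gen_cut gen that)
  have "uniform_limit UNIV (\<lambda>p t. \<alpha>cut (fst p) (snd p) t A) (\<lambda>t. \<alpha> t A) ?F"
  proof (rule uniform_limit_closure_star_alg_gen[where R=R])
    show "\<forall>\<^sub>F p in ?F. \<forall>t. star_automorphism st j (\<alpha>cut (fst p) (snd p) t)"
      using eventually_cutoffs_ordered by eventually_elim (simp add: aut_cut)
    show "A \<in> closure (star_alg_gen st j R)"
      by (simp flip: generated)
  qed (fact aut generators)+
  then have "uniform_limit {-T..T} (\<lambda>p t. \<alpha>cut (fst p) (snd p) t A) (\<lambda>t. \<alpha> t A) ?F"
    by (rule uniform_limit_on_subset) simp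
  then have "((\<lambda>p. SUP t\<in>{-T..T}. dist (\<alpha>cut (fst p) (snd p) t A) (\<alpha> t A)) \<longlongrightarrow> 0) ?F"
    using T by (intro uniform_limit_imp_SUP_dist_tendsto_0) simp_all
  then show ?thesis
    by (simp add: split_beta' dist_norm)
qed

end
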